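(* Let $(G,\cdot,D,\star)$ be an invariant probabilistic metric group with identity $e$, where $\star$ is a continuous triangle function. Then $\Pi(G)$ is closed under $\odot$ and $(\Pi(G),\odot,\mathbb D,\star)$ is a complete invariant probabilistic metric group with identity element $\delta_e$.
   Context: A distribution function is a nondecreasing, left-continuous function $F:[-\infty,+\infty]\to[0,1]$ with $F(-\infty)=0$, $F(+\infty)=1$; $\Delta^+$ is the set of distribution functions with $F(0)=0$, ordered pointwise (a complete lattice with maximum $\mathcal H_0$, $\mathcal H_0(t)=0$ for $t\le0$, $1$ for $t>0$). A triangle function is a binary operation $\star$ on $\Delta^+$ that is commutative, associative, nondecreasing in each argument, with $F\star\mathcal H_0=F$. $F_n\xrightarrow{w}F$ means $F_n(t)\to F(t)$ at every continuity point $t\in\mathbb R$ of $F$; $\star$ is continuous if $F_n\star L_n\xrightarrow{w}F\star L$ whenever $F_n\xrightarrow{w}F$, $L_n\xrightarrow{w}L$. A probabilistic metric space $(G,D,\star)$ consists of a set $G$, a triangle function $\star$ and $D:G\times G\to\Delta^+$ with (i) $D(p,q)=\mathcal H_0$ iff $p=q$; (ii) $D(p,q)=D(q,p)$; (iii) $D(p,q)\star D(q,r)\le D(p,r)$. If $(G,\cdot)$ is a group and $D(pr,qr)=D(rp,rq)=D(p,q)$ for all $p,q,r$, it is an invariant probabilistic metric group. A sequence $(z_n)$ is Cauchy if $D(z_n,z_p)\xrightarrow{w}\mathcal H_0$ as $n,p\to\infty$; completeness means every Cauchy sequence has a point $z$ with $D(z_n,z)\xrightarrow{w}\mathcal H_0$.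 A map $f:G\to\Delta^+$ is probabilistic $1$-Lipschitz if $D(x,y)\star f(y)\le f(x)$ for all $x,y$. $\delta_a(y)=D(y,a)$. $\Pi(G)$ is the set of probabilistic $1$-Lipschitz maps $f$ for which there is a Cauchy sequence $(a_n)\subset G$ with $D(a_n,x)\xrightarrow{w}f(x)$ for all $x$. $\mathbb D(f,g)=\sup_{x\in G}f(x)\star g(x)$ for $f,g\in\Pi(G)$. For maps $f,g:G\to\Delta^+$, $(f\odot g)(x)=\sup_{y,z\in G,\ yz=x}f(y)\star g(z)$. *)

theory Defs
  imports "HOL-Library.Extended_Real" "HOL-Algebra.Group"
begin

type_synonym dfun = "ereal \<Rightarrow> real"

definition H0 :: dfun where
  "H0 = (\<lambda>t. if t \<le> 0 then 0 else 1)"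

definition is_df :: "dfun \<Rightarrow> bool" where
  "is_df F \<longleftrightarrow> mono F \<and>
     (\<forall>t::real. continuous (at_left t) (\<lambda>s. F (ereal s))) \<and>
     F (-\<infinity>) = 0 \<and> F \<infinity> = 1"

definition Delta_plus :: "dfun set" where
  "Delta_plus = {F. is_df F \<and> F 0 = 0}"

definition wconv :: "('i \<Rightarrow> dfun) \<Rightarrow> dfun \<Rightarrow> 'i filter \<Rightarrow> bool" where
  "wconv Fs F net \<longleftrightarrow>
     (\<forall>t::real. isCont (\<lambda>s. F (ereal s)) t \<longrightarrow> ((\<lambda>i. Fs i (ereal t)) \<longlongrightarrow> F (ereal t)) net)"

definition triangle_function :: "(dfun \<Rightarrow> dfun \<Rightarrow> dfun) \<Rightarrow> bool" where
  "triangle_function T \<longleftrightarrow>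
     (\<forall>F\<in>Delta_plus. \<forall>L\<in>Delta_plus. T F L \<in> Delta_plus) \<and>
     (\<forall>F\<in>Delta_plus. \<forall>L\<in>Delta_plus. T F L = T L F) \<and>
     (\<forall>F\<in>Delta_plus. \<forall>L\<in>Delta_plus. \<forall>K\<in>Delta_plus. T (T F L) K = T F (T L K)) \<and>
     (\<forall>F\<in>Delta_plus. \<forall>F'\<in>Delta_plus. \<forall>L\<in>Delta_plus. F \<le> F' \<longrightarrow> T F L \<le> T F' L) \<and>
     (\<forall>F\<in>Delta_plus. \<forall>L\<in>Delta_plus. \<forall>L'\<in>Delta_plus. L \<le> L' \<longrightarrow> T F L \<le> T F L') \<and>
     (\<forall>F\<in>Delta_plus. T F H0 = F)"

definition continuous_tf :: "(dfun \<Rightarrow> dfun \<Rightarrow> dfun) \<Rightarrow> bool" where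
  "continuous_tf T \<longleftrightarrow>
     (\<forall>Fs Ls F L. (\<forall>n. Fs n \<in> Delta_plus \<and> Ls n \<in> Delta_plus) \<and> F \<in> Delta_plus \<and> L \<in> Delta_plus \<and>
        wconv Fs F sequentially \<and> wconv Ls L sequentially \<longrightarrow>
        wconv (\<lambda>n. T (Fs n) (Ls n)) (T F L) sequentially)"

definition pm_space :: "'a set \<Rightarrow> ('a \<Rightarrow> 'a \<Rightarrow> dfun) \<Rightarrow> (dfun \<Rightarrow> dfun \<Rightarrow> dfun) \<Rightarrow> bool" where
  "pm_space S D T \<longleftrightarrow> triangle_function T \<and>
     (\<forall>p\<in>S. \<forall>q\<in>S. D p q \<in> Delta_plus) \<and>
     (\<forall>p\<in>S. \<forall>q\<in>S. D p q = H0 \<longleftrightarrow> p = q) \<and>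
     (\<forall>p\<in>S. \<forall>q\<in>S. D p q = D q p) \<and>
     (\<forall>p\<in>S. \<forall>q\<in>S. \<forall>r\<in>S. T (D p q) (D q r) \<le> D p r)"

definition inv_pm_group ::
    "('a, 'b) monoid_scheme \<Rightarrow> ('a \<Rightarrow> 'a \<Rightarrow> dfun) \<Rightarrow> (dfun \<Rightarrow> dfun \<Rightarrow> dfun) \<Rightarrow> bool" where
  "inv_pm_group G D T \<longleftrightarrow> group G \<and> pm_space (carrier G) D T \<and>
     (\<forall>p\<in>carrier G. \<forall>q\<in>carrier G. \<forall>r\<in>carrier G.
        D (p \<otimes>\<^bsub>G\<^esub> r) (q \<otimes>\<^bsub>G\<^esub> r) = D p q \<and> D (r \<otimes>\<^bsub>G\<^esub> p) (r \<otimes>\<^bsub>G\<^esub> q) = D p q)"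

definition pm_cauchy :: "'a set \<Rightarrow> ('a \<Rightarrow> 'a \<Rightarrow> dfun) \<Rightarrow> (nat \<Rightarrow> 'a) \<Rightarrow> bool" where
  "pm_cauchy S D z \<longleftrightarrow> (\<forall>n. z n \<in> S) \<and>
     wconv (\<lambda>(n, p). D (z n) (z p)) H0 (sequentially \<times>\<^sub>F sequentially)"

definition pm_complete :: "'a set \<Rightarrow> ('a \<Rightarrow> 'a \<Rightarrow> dfun) \<Rightarrow> bool" where
  "pm_complete S D \<longleftrightarrow>
     (\<forall>z. pm_cauchy S D z \<longrightarrow> (\<exists>x\<in>S. wconv (\<lambda>n. D (z n) x) H0 sequentially))"

definition dsup :: "dfun set \<Rightarrow> dfun" where
  "dsup A = (\<lambda>t. Sup ((\<lambda>F. F t) ` A))"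

definition prob_lip1 ::
    "'a set \<Rightarrow> ('a \<Rightarrow> 'a \<Rightarrow> dfun) \<Rightarrow> (dfun \<Rightarrow> dfun \<Rightarrow> dfun) \<Rightarrow> ('a \<Rightarrow> dfun) \<Rightarrow> bool" where
  "prob_lip1 S D T f \<longleftrightarrow> (\<forall>x\<in>S. f x \<in> Delta_plus) \<and>
     (\<forall>x\<in>S. \<forall>y\<in>S. T (D x y) (f y) \<le> f x)"

text \<open>Maps G -> Delta_plus are represented as extensional functions on the carrier.\<close>
definition delta_map :: "'a set \<Rightarrow> ('a \<Rightarrow> 'a \<Rightarrow> dfun) \<Rightarrow> 'a \<Rightarrow> ('a \<Rightarrow> dfun)" where
  "delta_map S D a = restrict (\<lambda>y. D y a) S"

definition Pi_set ::
    "'a set \<Rightarrow> ('a \<Rightarrow> 'a \<Rightarrow> dfun) \<Rightarrow> (dfun \<Rightarrow> dfun \<Rightarrow> dfun) \<Rightarrow> ('a \<Rightarrow> dfun) set" where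
  "Pi_set S D T = {f. f \<in> extensional S \<and> prob_lip1 S D T f \<and>
     (\<exists>a. pm_cauchy S D a \<and> (\<forall>x\<in>S. wconv (\<lambda>n. D (a n) x) (f x) sequentially))}"

definition DD ::
    "'a set \<Rightarrow> (dfun \<Rightarrow> dfun \<Rightarrow> dfun) \<Rightarrow> ('a \<Rightarrow> dfun) \<Rightarrow> ('a \<Rightarrow> dfun) \<Rightarrow> dfun" where
  "DD S T f g = dsup {T (f x) (g x) | x. x \<in> S}"

definition odot ::
    "('a, 'b) monoid_scheme \<Rightarrow> (dfun \<Rightarrow> dfun \<Rightarrow> dfun) \<Rightarrow> ('a \<Rightarrow> dfun) \<Rightarrow> ('a \<Rightarrow> dfun) \<Rightarrow> ('a \<Rightarrow> dfun)" where
  "odot G T f g = restrict (\<lambda>x. dsup {T (f y) (g z) | y z.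
        y \<in> carrier G \<and> z \<in> carrier G \<and> y \<otimes>\<^bsub>G\<^esub> z = x}) (carrier G)"

definition Pi_group ::
    "('a, 'b) monoid_scheme \<Rightarrow> ('a \<Rightarrow> 'a \<Rightarrow> dfun) \<Rightarrow> (dfun \<Rightarrow> dfun \<Rightarrow> dfun) \<Rightarrow> ('a \<Rightarrow> dfun) monoid" where
  "Pi_group G D T = \<lparr>carrier = Pi_set (carrier G) D T, mult = odot G T,
      one = delta_map (carrier G) D \<one>\<^bsub>G\<^esub>\<rparr>"

end

(*
  Every f in Pi(G) is represented by a Cauchy sequence (a n) with D (a n) x -> f x weakly, and all
  structure on Pi(G) is computed along representing sequences: if (a n) and (b n) represent f and g,
  then D (a n) (b n) -> DD f g, the products a n * b n represent f odot g, and the inverses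
  inv (a n) represent x |-> f (inv x). The two limits are identified by Helly selection: a
  subsequential limit K is an upper bound of the supremum defining DD f g (resp. (f odot g) x) by the
  triangle inequality, and a lower bound of it because f (a m) -> H0 and the triangle function is
  continuous. The group and metric axioms, including invariance, then pass to the limit from G.
  For completeness, a Cauchy sequence (z k) in Pi(G) is followed by points b k with z k (b k) -> H0;
  (b k) is Cauchy in G, and the function it represents is the limit of (z k).
*)

theory Submission
  imports Defs "HOL-Probability.Helly_Selection"
begin

lemma Delta_plus_mono: "F \<in> Delta_plus \<Longrightarrow> mono F"
  by (simp add: Delta_plus_def is_df_def)

lemma Delta_plus_monoD: "F \<in> Delta_plus \<Longrightarrow> x \<le> y \<Longrightarrow> F x \<le> F y"
  using Delta_plus_mono monoD by blast

lemma Delta_plus_mono_real: "F \<in> Delta_plus \<Longrightarrow> mono (\<lambda>s. F (ereal s))"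
  by (auto simp: mono_def intro: Delta_plus_monoD)

lemma Delta_plus_minf: "F \<in> Delta_plus \<Longrightarrow> F (-\<infinity>) = 0"
  by (simp add: Delta_plus_def is_df_def)

lemma Delta_plus_pinf: "F \<in> Delta_plus \<Longrightarrow> F \<infinity> = 1"
  by (simp add: Delta_plus_def is_df_def)

lemma Delta_plus_left_continuous: "F \<in> Delta_plus \<Longrightarrow> continuous (at_left t) (\<lambda>s. F (ereal s))"
  by (simp add: Delta_plus_def is_df_def)

lemma Delta_plus_nonneg: "F \<in> Delta_plus \<Longrightarrow> 0 \<le> F x"
  using Delta_plus_monoD[of F "-\<infinity>" x] Delta_plus_minf[of F] by auto

lemma Delta_plus_le_1: "F \<in> Delta_plus \<Longrightarrow> F x \<le> 1"
  using Delta_plus_monoD[of F x "\<infinity>"] Delta_plus_pinf[of F] by auto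

lemma Delta_plus_nonpos: "F \<in> Delta_plus \<Longrightarrow> x \<le> 0 \<Longrightarrow> F x = 0"
  using Delta_plus_monoD[of F x 0] Delta_plus_nonneg[of F x] by (auto simp: Delta_plus_def)

lemma H0_in_Delta_plus: "H0 \<in> Delta_plus"
proof -
  have "continuous (at_left t) (\<lambda>s. H0 (ereal s))" for t
  proof -
    have "eventually (\<lambda>s. H0 (ereal s) = H0 (ereal t)) (at_left t)"
      unfolding eventually_at_left_field
      by (intro exI[of _ "if t \<le> 0 then t - 1 else 0"]) (auto simp: H0_def)
    then show ?thesis
      unfolding continuous_within by (rule tendsto_eventually)
  qed
  then show ?thesis
    unfolding Delta_plus_def is_df_def mono_def H0_def by auto
qed

lemma left_continuous_le_mono_off_countable:
  fixes f g :: "real \<Rightarrow> real"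
  assumes f: "continuous (at_left t) f" and g: "mono g" and C: "countable C" and a: "a < t"
    and le: "\<And>s. a < s \<Longrightarrow> s < t \<Longrightarrow> s \<notin> C \<Longrightarrow> f s \<le> g s"
  shows "f t \<le> g t"
proof (rule ccontr)
  assume "\<not> ?thesis"
  then have "eventually (\<lambda>s. g t < f s) (at_left t)"
    using f order_tendstoD(1) by (force simp: continuous_within)
  then obtain b where b: "b < t" "\<And>s. b < s \<Longrightarrow> s < t \<Longrightarrow> g t < f s"
    unfolding eventually_at_left_field by blast
  have "{max a b<..<t} \<noteq> {}" using a b(1) by simp
  then obtain c where c: "max a b < c" "c < t" "c \<notin> C"
    using open_minus_countable[OF C, of "{max a b<..<t}"] by auto
  have "f c \<le> g c" using le c by auto
  also have "\<dots> \<le> g t" using g c(2) by (auto simp: mono_def)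
  finally show False using b(2)[of c] c by simp
qed

lemma Delta_plus_le_mono_off_countable:
  assumes F: "F \<in> Delta_plus" and G: "mono (\<lambda>s. G (ereal s))" and C: "countable C"
    and le: "\<And>s. s \<notin> C \<Longrightarrow> F (ereal s) \<le> G (ereal s)"
  shows "F (ereal t) \<le> G (ereal t)"
  using left_continuous_le_mono_off_countable[OF Delta_plus_left_continuous[OF F] G C, of "t - 1"] le
  by auto

lemma countable_discontinuities_Delta_plus:
  "F \<in> Delta_plus \<Longrightarrow> countable {t. \<not> isCont (\<lambda>s. F (ereal s)) t}"
  by (rule mono_ctble_discont[OF Delta_plus_mono_real])

lemma le_Delta_plusI:
  assumes "F \<in> Delta_plus" "G \<in> Delta_plus" "\<And>t. F (ereal t) \<le> G (ereal t)"
  shows "F \<le> G"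
proof (rule le_funI)
  fix x show "F x \<le> G x"
    using assms by (cases x) (auto simp: Delta_plus_minf Delta_plus_pinf)
qed

lemma wconv_const: "wconv (\<lambda>i. F) F net"
  by (simp add: wconv_def)

lemma wconv_compose:
  assumes "wconv Fs F F1" "filterlim g F1 F2"
  shows "wconv (\<lambda>i. Fs (g i)) F F2"
  using assms unfolding wconv_def by (auto intro: filterlim_compose)

lemma wconv_subseq:
  assumes "wconv Fs F sequentially" "strict_mono \<sigma>"
  shows "wconv (\<lambda>i. Fs (\<sigma> i)) F sequentially"
  using wconv_compose[OF assms(1) filterlim_subseq[OF assms(2)]] .

lemma wconv_le_mono:
  assumes Fs: "wconv Fs F sequentially" and F: "F \<in> Delta_plus"
    and G: "mono (\<lambda>s. G (ereal s))" and le: "\<And>n t. Fs n (ereal t) \<le> G (ereal t)"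
  shows "F (ereal t) \<le> G (ereal t)"
proof (rule Delta_plus_le_mono_off_countable[OF F G countable_discontinuities_Delta_plus[OF F]])
  fix s assume "s \<notin> {t. \<not> isCont (\<lambda>s. F (ereal s)) t}"
  then have "(\<lambda>n. Fs n (ereal s)) \<longlonglongrightarrow> F (ereal s)" using Fs by (auto simp: wconv_def)
  then show "F (ereal s) \<le> G (ereal s)"
    by (rule LIMSEQ_le_const2) (use le in auto)
qed

lemma wconv_le:
  assumes Fs: "wconv Fs F sequentially" and Gs: "wconv Gs G sequentially"
    and F: "F \<in> Delta_plus" and G: "G \<in> Delta_plus" and le: "\<And>n. Fs n \<le> Gs n"
  shows "F \<le> G"
proof (rule le_Delta_plusI[OF F G])
  let ?C = "{t. \<not> isCont (\<lambda>s. F (ereal s)) t} \<union> {t. \<not> isCont (\<lambda>s. G (ereal s)) t}"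
  fix t
  show "F (ereal t) \<le> G (ereal t)"
  proof (rule Delta_plus_le_mono_off_countable[OF F Delta_plus_mono_real[OF G], of ?C])
    show "countable ?C" using countable_discontinuities_Delta_plus F G by auto
    fix s assume "s \<notin> ?C"
    then have "(\<lambda>n. Fs n (ereal s)) \<longlonglongrightarrow> F (ereal s)" "(\<lambda>n. Gs n (ereal s)) \<longlonglongrightarrow> G (ereal s)"
      using Fs Gs by (auto simp: wconv_def)
    then show "F (ereal s) \<le> G (ereal s)"
      by (rule LIMSEQ_le) (use le in \<open>auto simp: le_fun_def\<close>)
  qed
qed

lemma wconv_unique:
  assumes "wconv Fs F sequentially" "wconv Fs G sequentially" "F \<in> Delta_plus" "G \<in> Delta_plus"
  shows "F = G"
  using wconv_le[OF assms(1,2,3,4)] wconv_le[OF assms(2,1,4,3)] by auto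

lemma wconv_H0_iff:
  assumes "\<And>i. Fs i \<in> Delta_plus"
  shows "wconv Fs H0 net \<longleftrightarrow> (\<forall>t>0. \<forall>c<1. eventually (\<lambda>i. c < Fs i (ereal t)) net)"
proof -
  have "((\<lambda>i. Fs i (ereal t)) \<longlongrightarrow> 1) net \<longleftrightarrow> (\<forall>c<1. eventually (\<lambda>i. c < Fs i (ereal t)) net)" for t
  proof -
    have "eventually (\<lambda>i. Fs i (ereal t) < u) net" if "1 < u" for u
      using Delta_plus_le_1[OF assms] that by (intro always_eventually) (auto intro: le_less_trans)
    then show ?thesis unfolding order_tendsto_iff by auto
  qed
  moreover have "isCont (\<lambda>s. H0 (ereal s)) t" if "0 < t" for t
  proof -
    have "eventually (\<lambda>s. H0 (ereal s) = 1) (nhds t)"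
      using eventually_nhds_in_open[of "{0<..}" t] that by (auto elim: eventually_mono simp: H0_def)
    then have "isCont (\<lambda>s. H0 (ereal s)) t \<longleftrightarrow> isCont (\<lambda>_. 1::real) t"
      by (rule isCont_cong)
    then show ?thesis by simp
  qed
  ultimately show ?thesis
    using Delta_plus_nonpos[OF assms] unfolding wconv_def
    by (auto simp: H0_def not_le)
qed

lemma wconv_H0_squeeze:
  assumes "\<And>i. Fs i \<in> Delta_plus" "\<And>i. Gs i \<in> Delta_plus"
    and "wconv Gs H0 net" "eventually (\<lambda>i. Gs i \<le> Fs i) net"
  shows "wconv Fs H0 net"
  unfolding wconv_H0_iff[OF assms(1)]
proof (intro allI impI)
  fix t c :: real assume "0 < t" "c < 1"
  then have "eventually (\<lambda>i. c < Gs i (ereal t)) net"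
    using assms(3) unfolding wconv_H0_iff[OF assms(2)] by blast
  then show "eventually (\<lambda>i. c < Fs i (ereal t)) net"
    using assms(4) by eventually_elim (auto dest: le_funD intro: less_le_trans)
qed

lemma wconv_H0_of_approx:
  fixes Hs :: "nat \<Rightarrow> dfun"
  assumes H: "\<And>n. Hs n \<in> Delta_plus"
    and approx: "\<And>n. 1 - inverse (real (Suc n)) < Hs n (ereal (inverse (real (Suc n))))"
  shows "wconv Hs H0 sequentially"
  unfolding wconv_H0_iff[OF H]
proof (intro allI impI)
  fix t c :: real assume "0 < t" "c < 1"
  then obtain N where N: "inverse (real (Suc N)) < min t (1 - c)"
    using reals_Archimedean by (metis diff_gt_0_iff_gt min_less_iff_conj)
  show "eventually (\<lambda>n. c < Hs n (ereal t)) sequentially"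
    unfolding eventually_sequentially
  proof (intro exI allI impI)
    fix n assume "N \<le> n"
    then have le: "inverse (real (Suc n)) \<le> inverse (real (Suc N))"
      by (simp add: le_imp_inverse_le)
    have le_t: "inverse (real (Suc n)) \<le> t" using N le by linarith
    have "c < 1 - inverse (real (Suc n))" using N le by linarith
    also have "\<dots> < Hs n (ereal (inverse (real (Suc n))))" using approx .
    also have "\<dots> \<le> Hs n (ereal t)"
      by (rule Delta_plus_monoD[OF H]) (simp del: of_nat_Suc add: le_t)
    finally show "c < Hs n (ereal t)" .
  qed
qed

lemma wconv_lower_bound:
  assumes Fs: "wconv Fs F sequentially" and F: "F \<in> Delta_plus"
    and Fs_in: "\<And>n. Fs n \<in> Delta_plus" and "s0 < t"
    and ev: "eventually (\<lambda>n. c \<le> Fs n (ereal s0)) sequentially"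
  shows "c \<le> F (ereal t)"
proof -
  obtain s where s: "s0 < s" "s < t" "isCont (\<lambda>s. F (ereal s)) s"
    using open_minus_countable[OF countable_discontinuities_Delta_plus[OF F], of "{s0<..<t}"]
      \<open>s0 < t\<close> by auto
  have "(\<lambda>n. Fs n (ereal s)) \<longlonglongrightarrow> F (ereal s)" using Fs s(3) by (auto simp: wconv_def)
  moreover have "eventually (\<lambda>n. c \<le> Fs n (ereal s)) sequentially"
  proof -
    have m: "Fs n (ereal s0) \<le> Fs n (ereal s)" for n
      using Delta_plus_monoD[OF Fs_in, of "ereal s0" "ereal s"] s(1) by simp
    show ?thesis using ev by eventually_elim (rule order_trans[OF _ m])
  qed
  ultimately have "c \<le> F (ereal s)" by (rule tendsto_lowerbound) simp
  also have "\<dots> \<le> F (ereal t)" using Delta_plus_monoD[OF F] s(2) by simp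
  finally show ?thesis .
qed

lemma Delta_plus_from_real:
  fixes K :: "real \<Rightarrow> real"
  assumes "mono K" "\<And>t. continuous (at_left t) K" "\<And>t. 0 \<le> K t" "\<And>t. K t \<le> 1" "K 0 = 0"
  shows "\<exists>F\<in>Delta_plus. \<forall>t. F (ereal t) = K t"
proof -
  define F :: dfun where
    "F x = (if x = \<infinity> then 1 else if x = -\<infinity> then 0 else K (real_of_ereal x))" for x
  have "mono F"
    unfolding mono_def
  proof (intro allI impI)
    fix x y :: ereal assume "x \<le> y"
    then show "F x \<le> F y"
      by (cases x; cases y) (auto simp: F_def assms(3,4) intro: monoD[OF assms(1)])
  qed
  then have "F \<in> Delta_plus"
    using assms(2,5) by (auto simp: Delta_plus_def is_df_def F_def zero_ereal_def)
  moreover have "\<forall>t. F (ereal t) = K t" by (simp add: F_def)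
  ultimately show ?thesis by blast
qed

lemma wconv_Delta_plus_of_real_limit:
  fixes Fs :: "nat \<Rightarrow> dfun" and K :: "real \<Rightarrow> real"
  assumes Fs: "\<And>n. Fs n \<in> Delta_plus" and K_mono: "mono K" and K_lc: "\<And>t. continuous (at_left t) K"
    and K_lim: "\<And>t. isCont K t \<Longrightarrow> (\<lambda>n. Fs n (ereal t)) \<longlonglongrightarrow> K t"
  shows "\<exists>F\<in>Delta_plus. wconv Fs F sequentially"
proof -
  define C where "C = {t. \<not> isCont K t}"
  have C: "countable C" unfolding C_def by (rule mono_ctble_discont[OF K_mono])
  have K_lim': "(\<lambda>n. Fs n (ereal s)) \<longlonglongrightarrow> K s" if "s \<notin> C" for s
    using K_lim that by (simp add: C_def)
  have "0 \<le> K t" for t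
    by (rule left_continuous_le_mono_off_countable[OF _ K_mono C, where a="t - 1"])
      (auto intro!: tendsto_lowerbound[OF K_lim'] always_eventually Delta_plus_nonneg[OF Fs])
  moreover have "K t \<le> 1" for t
    by (rule left_continuous_le_mono_off_countable[OF K_lc _ C, where a="t - 1"])
      (auto intro!: tendsto_upperbound[OF K_lim'] always_eventually Delta_plus_le_1[OF Fs] simp: mono_def)
  moreover have "K 0 \<le> 0"
  proof (rule left_continuous_le_mono_off_countable[OF K_lc _ C, where a="-1" and g="\<lambda>_. 0"])
    fix s :: real assume "-1 < s" "s < 0" "s \<notin> C"
    then have "(\<lambda>n. 0) \<longlonglongrightarrow> K s"
      using K_lim'[of s] Delta_plus_nonpos[OF Fs, of "ereal s"] by simp
    then show "K s \<le> 0" using LIMSEQ_unique[OF _ tendsto_const] by fastforce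
  qed (simp_all add: mono_def)
  ultimately obtain F where F: "F \<in> Delta_plus" "\<And>t. F (ereal t) = K t"
    using Delta_plus_from_real[OF K_mono K_lc] by (metis order_antisym)
  have "wconv Fs F sequentially"
    unfolding wconv_def F(2) using K_lim by (simp add: F(2)[abs_def])
  then show ?thesis using F(1) by blast
qed

lemma Helly_selection_Delta_plus:
  fixes Fs :: "nat \<Rightarrow> dfun"
  assumes Fs: "\<And>n. Fs n \<in> Delta_plus"
  shows "\<exists>\<sigma> K. strict_mono \<sigma> \<and> K \<in> Delta_plus \<and> wconv (\<lambda>n. Fs (\<sigma> n)) K sequentially"
proof -
  \<comment> \<open>The library's Helly selection is for right-continuous functions: reflect at the origin.\<close>
  define f :: "nat \<Rightarrow> real \<Rightarrow> real" where "f n x = - Fs n (ereal (- x))" for n x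
  have "continuous (at_right x) (f n)" for n x
  proof -
    have "((\<lambda>s. Fs n (ereal s)) \<longlongrightarrow> Fs n (ereal (-x))) (at_left (-x))"
      using Delta_plus_left_continuous[OF Fs[of n], of "-x"] by (simp add: continuous_within)
    then have "((\<lambda>y. Fs n (ereal (- y))) \<longlongrightarrow> Fs n (ereal (-x))) (at_right x)"
      unfolding filterlim_at_left_to_right by simp
    then show ?thesis
      unfolding continuous_within f_def by (intro tendsto_minus)
  qed
  moreover have "mono (f n)" for n
    unfolding mono_def f_def using Delta_plus_monoD[OF Fs] by simp
  moreover have "\<bar>f n x\<bar> \<le> 1" for n x
    unfolding f_def using Delta_plus_nonneg[OF Fs] Delta_plus_le_1[OF Fs] by (simp add: abs_le_iff)
  ultimately obtain \<sigma> Fl where \<sigma>: "strict_mono \<sigma>" and Fl_rc: "\<And>x. continuous (at_right x) Fl"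
    and Fl_mono: "mono Fl" and Fl_lim: "\<And>x. isCont Fl x \<Longrightarrow> (\<lambda>n. f (\<sigma> n) x) \<longlonglongrightarrow> Fl x"
    using Helly_selection[where f=f and M=1] by blast
  define K where "K t = - Fl (- t)" for t
  have "mono K" using Fl_mono unfolding K_def mono_def by simp
  moreover have "continuous (at_left t) K" for t
  proof -
    have "(Fl \<longlongrightarrow> Fl (-t)) (at_right (-t))" using Fl_rc[of "-t"] by (simp add: continuous_within)
    then have "((\<lambda>y. Fl (- y)) \<longlongrightarrow> Fl (-t)) (at_left t)"
      using filterlim_at_left_to_right[of "\<lambda>y. Fl (- y)" "nhds (Fl (-t))" t] by simp
    then show ?thesis unfolding K_def continuous_within by (intro tendsto_minus)
  qed
  moreover have "(\<lambda>n. Fs (\<sigma> n) (ereal t)) \<longlonglongrightarrow> K t" if "isCont K t" for t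
  proof -
    have "isCont (\<lambda>x. - K (- x)) (-t)"
      using that by (intro continuous_intros isCont_o2[where f=uminus and g=K]) auto
    then have "isCont Fl (-t)" by (simp add: K_def fun_eq_iff)
    then have "(\<lambda>n. - f (\<sigma> n) (-t)) \<longlonglongrightarrow> - Fl (-t)" by (intro tendsto_minus Fl_lim)
    then show ?thesis by (simp add: f_def K_def)
  qed
  ultimately show ?thesis
    using wconv_Delta_plus_of_real_limit[of "\<lambda>n. Fs (\<sigma> n)" K] Fs \<sigma> by blast
qed

lemma wconv_if_subseq_limits_eq:
  fixes Fs :: "nat \<Rightarrow> dfun"
  assumes Fs: "\<And>n. Fs n \<in> Delta_plus"
    and lim: "\<And>\<sigma> K. strict_mono \<sigma> \<Longrightarrow> K \<in> Delta_plus \<Longrightarrow> wconv (\<lambda>n. Fs (\<sigma> n)) K sequentially \<Longrightarrow> K = F"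
  shows "F \<in> Delta_plus \<and> wconv Fs F sequentially"
proof
  obtain \<sigma> K where \<sigma>: "strict_mono \<sigma>" "K \<in> Delta_plus" "wconv (\<lambda>n. Fs (\<sigma> n)) K sequentially"
    using Helly_selection_Delta_plus[of Fs, OF Fs] by blast
  then have "K = F" by (rule lim)
  then show F: "F \<in> Delta_plus" using \<sigma>(2) by simp
  show "wconv Fs F sequentially"
    unfolding wconv_def
  proof (intro allI impI)
    fix t assume cont: "isCont (\<lambda>s. F (ereal s)) t"
    show "(\<lambda>n. Fs n (ereal t)) \<longlonglongrightarrow> F (ereal t)"
    proof (rule ccontr)
      assume "\<not> ?thesis"
      then obtain e where e: "0 < e" "\<not> eventually (\<lambda>n. dist (Fs n (ereal t)) (F (ereal t)) < e) sequentially"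
        unfolding tendsto_iff by blast
      then have "infinite {n. \<not> dist (Fs n (ereal t)) (F (ereal t)) < e}"
        unfolding infinite_nat_iff_unbounded_le eventually_sequentially by auto
      then obtain r :: "nat \<Rightarrow> nat" where r: "strict_mono r" "\<And>n. \<not> dist (Fs (r n) (ereal t)) (F (ereal t)) < e"
        using infinite_enumerate by blast
      obtain \<sigma> K where \<sigma>: "strict_mono \<sigma>" "K \<in> Delta_plus" "wconv (\<lambda>n. Fs (r (\<sigma> n))) K sequentially"
        using Helly_selection_Delta_plus[of "\<lambda>n. Fs (r n)"] Fs by blast
      have "K = F" using lim[of "r \<circ> \<sigma>" K] strict_mono_o[OF r(1) \<sigma>(1)] \<sigma> by (simp add: comp_def)
      then have "(\<lambda>n. Fs (r (\<sigma> n)) (ereal t)) \<longlonglongrightarrow> F (ereal t)"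
        using \<sigma>(3) cont by (auto simp: wconv_def)
      then have "eventually (\<lambda>n. dist (Fs (r (\<sigma> n)) (ereal t)) (F (ereal t)) < e) sequentially"
        by (rule tendstoD[OF _ e(1)])
      then obtain N where "\<And>n. N \<le> n \<Longrightarrow> dist (Fs (r (\<sigma> n)) (ereal t)) (F (ereal t)) < e"
        unfolding eventually_sequentially by blast
      then show False using r(2)[of "\<sigma> N"] by simp
    qed
  qed
qed

lemma wconv_if_subseq_limits_le:
  fixes Fs :: "nat \<Rightarrow> dfun"
  assumes Fs: "\<And>n. Fs n \<in> Delta_plus"
    and le: "\<And>\<sigma>1 \<sigma>2 K1 K2. strict_mono \<sigma>1 \<Longrightarrow> strict_mono \<sigma>2 \<Longrightarrow> K1 \<in> Delta_plus \<Longrightarrow> K2 \<in> Delta_plus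
       \<Longrightarrow> wconv (\<lambda>n. Fs (\<sigma>1 n)) K1 sequentially \<Longrightarrow> wconv (\<lambda>n. Fs (\<sigma>2 n)) K2 sequentially \<Longrightarrow> K1 \<le> K2"
  shows "\<exists>K\<in>Delta_plus. wconv Fs K sequentially"
proof -
  obtain \<sigma>0 K0 where \<sigma>0: "strict_mono \<sigma>0" "K0 \<in> Delta_plus" "wconv (\<lambda>n. Fs (\<sigma>0 n)) K0 sequentially"
    using Helly_selection_Delta_plus[of Fs, OF Fs] by blast
  have "wconv Fs K0 sequentially"
  proof (rule conjunct2[OF wconv_if_subseq_limits_eq[OF Fs]])
    fix \<sigma> K assume \<sigma>: "strict_mono \<sigma>" "K \<in> Delta_plus" "wconv (\<lambda>n. Fs (\<sigma> n)) K sequentially"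
    show "K = K0"
      by (rule antisym[OF le[OF \<sigma>(1) \<sigma>0(1) \<sigma>(2) \<sigma>0(2) \<sigma>(3) \<sigma>0(3)]
            le[OF \<sigma>0(1) \<sigma>(1) \<sigma>0(2) \<sigma>(2) \<sigma>0(3) \<sigma>(3)]])
  qed
  then show ?thesis using \<sigma>0(2) by blast
qed

lemma dsup_upper:
  assumes "A \<subseteq> Delta_plus" "F \<in> A"
  shows "F x \<le> dsup A x"
  unfolding dsup_def using assms Delta_plus_le_1
  by (intro cSup_upper) (auto intro!: bdd_aboveI[of _ 1])

lemma dsup_least:
  assumes "A \<noteq> {}" "\<And>F. F \<in> A \<Longrightarrow> F x \<le> c"
  shows "dsup A x \<le> c"
  unfolding dsup_def using assms by (intro cSup_least) auto

text \<open>The supremum is not known to be left-continuous beforehand; comparison with \<open>K\<close> at the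
  real points suffices.\<close>
lemma dsup_eq_wconv_limit:
  assumes A: "A \<subseteq> Delta_plus" and K: "K \<in> Delta_plus" and upper: "\<And>F. F \<in> A \<Longrightarrow> F \<le> K"
    and Hs: "wconv Hs K sequentially" and lower: "\<And>m. \<exists>F\<in>A. Hs m \<le> F"
  shows "dsup A = K"
proof (rule ext, rule antisym)
  obtain F0 where F0: "F0 \<in> A" using lower by blast
  then show "dsup A x \<le> K x" for x
    using upper by (auto intro: dsup_least le_funD)
  have mono: "mono (\<lambda>s. dsup A (ereal s))"
  proof (rule monoI, rule dsup_least)
    fix s s' :: real and F assume "s \<le> s'" "F \<in> A"
    then have "F (ereal s) \<le> F (ereal s')" using A Delta_plus_monoD by auto
    also have "\<dots> \<le> dsup A (ereal s')" using dsup_upper[OF A \<open>F \<in> A\<close>] .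
    finally show "F (ereal s) \<le> dsup A (ereal s')" .
  qed (use F0 in auto)
  have "K (ereal t) \<le> dsup A (ereal t)" for t
  proof (rule wconv_le_mono[OF Hs K mono])
    fix m t
    obtain F where "F \<in> A" "Hs m \<le> F" using lower by blast
    then show "Hs m (ereal t) \<le> dsup A (ereal t)"
      using dsup_upper[OF A] le_funD order_trans by metis
  qed
  then show "K x \<le> dsup A x" for x
    using dsup_upper[OF A F0, of x] A F0 K
    by (cases x) (auto simp: Delta_plus_minf Delta_plus_pinf)
qed

locale cont_triangle_function =
  fixes T :: "dfun \<Rightarrow> dfun \<Rightarrow> dfun"
  assumes triangle: "triangle_function T" and continuous: "continuous_tf T"
begin

lemma T_in_Delta_plus: "F \<in> Delta_plus \<Longrightarrow> L \<in> Delta_plus \<Longrightarrow> T F L \<in> Delta_plus"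
  using triangle[unfolded triangle_function_def, THEN conjunct1] by blast

lemma T_commute: "F \<in> Delta_plus \<Longrightarrow> L \<in> Delta_plus \<Longrightarrow> T F L = T L F"
  using triangle[unfolded triangle_function_def, THEN conjunct2, THEN conjunct1] by blast

lemma T_mono:
  assumes "F \<in> Delta_plus" "F' \<in> Delta_plus" "L \<in> Delta_plus" "L' \<in> Delta_plus" "F \<le> F'" "L \<le> L'"
  shows "T F L \<le> T F' L'"
proof -
  note mono = triangle[unfolded triangle_function_def, THEN conjunct2, THEN conjunct2, THEN conjunct2]
  have "T F L \<le> T F' L" using mono[THEN conjunct1] assms by blast
  also have "\<dots> \<le> T F' L'" using mono[THEN conjunct2, THEN conjunct1] assms by blast
  finally show ?thesis .
qed

lemma T_H0_right: "F \<in> Delta_plus \<Longrightarrow> T F H0 = F"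
  using triangle[unfolded triangle_function_def, THEN conjunct2, THEN conjunct2, THEN conjunct2,
      THEN conjunct2, THEN conjunct2]
  by blast

lemma T_H0_left: "F \<in> Delta_plus \<Longrightarrow> T H0 F = F"
  by (simp add: T_commute[OF H0_in_Delta_plus] T_H0_right)

lemma T_wconv:
  assumes "\<And>n. Fs n \<in> Delta_plus" "\<And>n. Ls n \<in> Delta_plus" "F \<in> Delta_plus" "L \<in> Delta_plus"
    and "wconv Fs F sequentially" "wconv Ls L sequentially"
  shows "wconv (\<lambda>n. T (Fs n) (Ls n)) (T F L) sequentially"
  by (rule continuous[unfolded continuous_tf_def, rule_format]) (use assms in auto)

lemma T_wconv_H0_left:
  assumes "\<And>n. Fs n \<in> Delta_plus" "\<And>n. Ls n \<in> Delta_plus" "L \<in> Delta_plus"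
    and "wconv Fs H0 sequentially" "wconv Ls L sequentially"
  shows "wconv (\<lambda>n. T (Fs n) (Ls n)) L sequentially"
  using T_wconv[OF assms(1,2) H0_in_Delta_plus assms(3-5)] T_H0_left[OF assms(3)] by simp

text \<open>Sequential continuity of \<open>T\<close> at \<open>(H0, H0)\<close> is upgraded to a uniform statement by
  contradiction; this is what makes \<open>H0\<close> a limit of \<open>T\<close> along arbitrary filters.\<close>
lemma T_H0_uniform:
  assumes "0 < t" "c < 1"
  obtains s b where "0 < s" "b < 1"
    "\<And>F L. F \<in> Delta_plus \<Longrightarrow> L \<in> Delta_plus \<Longrightarrow> b < F (ereal s) \<Longrightarrow> b < L (ereal s)
       \<Longrightarrow> c < T F L (ereal t)"
proof (rule ccontr)
  let ?e = "\<lambda>n::nat. inverse (real (Suc n))"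
  assume "\<not> thesis"
  have "\<exists>F L. F \<in> Delta_plus \<and> L \<in> Delta_plus \<and> 1 - ?e n < F (ereal (?e n))
     \<and> 1 - ?e n < L (ereal (?e n)) \<and> \<not> c < T F L (ereal t)" for n
  proof (rule ccontr)
    assume "\<not> ?thesis"
    then have "c < T F L (ereal t)"
      if "F \<in> Delta_plus" "L \<in> Delta_plus" "1 - ?e n < F (ereal (?e n))" "1 - ?e n < L (ereal (?e n))"
      for F L
      using that by blast
    then show False using that[of "?e n" "1 - ?e n"] \<open>\<not> thesis\<close> by simp
  qed
  then obtain Fs Ls where FL: "\<And>n. Fs n \<in> Delta_plus" "\<And>n. Ls n \<in> Delta_plus"
    "\<And>n. 1 - ?e n < Fs n (ereal (?e n))" "\<And>n. 1 - ?e n < Ls n (ereal (?e n))"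
    "\<And>n. \<not> c < T (Fs n) (Ls n) (ereal t)"
    by metis
  have "wconv (\<lambda>n. T (Fs n) (Ls n)) H0 sequentially"
    by (rule T_wconv_H0_left[OF FL(1,2) H0_in_Delta_plus wconv_H0_of_approx wconv_H0_of_approx])
      (use FL in auto)
  then have "eventually (\<lambda>n. c < T (Fs n) (Ls n) (ereal t)) sequentially"
    using wconv_H0_iff[of "\<lambda>n. T (Fs n) (Ls n)"] T_in_Delta_plus FL(1,2) assms by blast
  then show False using FL(5) by (auto simp: eventually_sequentially)
qed

lemma T_wconv_H0:
  assumes Fs: "\<And>i. Fs i \<in> Delta_plus" and Ls: "\<And>i. Ls i \<in> Delta_plus"
    and "wconv Fs H0 net" "wconv Ls H0 net"
  shows "wconv (\<lambda>i. T (Fs i) (Ls i)) H0 net"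
  unfolding wconv_H0_iff[OF T_in_Delta_plus[OF Fs Ls]]
proof (intro allI impI)
  fix t c :: real assume "0 < t" "c < 1"
  obtain s b where sb: "0 < s" "b < 1" and
    H: "\<And>F L. F \<in> Delta_plus \<Longrightarrow> L \<in> Delta_plus \<Longrightarrow> b < F (ereal s) \<Longrightarrow> b < L (ereal s)
      \<Longrightarrow> c < T F L (ereal t)"
    using T_H0_uniform[OF \<open>0 < t\<close> \<open>c < 1\<close>] by blast
  have "eventually (\<lambda>i. b < Fs i (ereal s)) net" "eventually (\<lambda>i. b < Ls i (ereal s)) net"
    using assms(3,4) sb unfolding wconv_H0_iff[OF Fs] wconv_H0_iff[OF Ls] by auto
  then show "eventually (\<lambda>i. c < T (Fs i) (Ls i) (ereal t)) net"
    by eventually_elim (rule H[OF Fs Ls])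
qed

lemma T_twice_wconv_H0_left:
  assumes "\<And>n. Fs n \<in> Delta_plus" "wconv Fs H0 sequentially" "K \<in> Delta_plus"
  shows "wconv (\<lambda>n. T (Fs n) (T (Fs n) K)) K sequentially"
  using assms T_in_Delta_plus
  by (intro T_wconv_H0_left T_wconv_H0_left[where Ls="\<lambda>_. K"] wconv_const) auto

end

locale cont_inv_pm_group =
  fixes G :: "('a, 'b) monoid_scheme" (structure)
    and D :: "'a \<Rightarrow> 'a \<Rightarrow> dfun"
    and T :: "dfun \<Rightarrow> dfun \<Rightarrow> dfun"
  assumes inv_pm: "inv_pm_group G D T" and continuous_T: "continuous_tf T"
begin

sublocale group G
  using inv_pm by (simp add: inv_pm_group_def)

sublocale cont_triangle_function T
  using inv_pm continuous_T by unfold_locales (simp_all add: inv_pm_group_def pm_space_def)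

abbreviation "PiG \<equiv> Pi_set (carrier G) D T"
abbreviation "DDG \<equiv> DD (carrier G) T"
abbreviation "odotG \<equiv> odot G T"
abbreviation "deltaG \<equiv> delta_map (carrier G) D"

lemma D_in_Delta_plus: "p \<in> carrier G \<Longrightarrow> q \<in> carrier G \<Longrightarrow> D p q \<in> Delta_plus"
  using inv_pm by (simp add: inv_pm_group_def pm_space_def)

lemma D_self: "p \<in> carrier G \<Longrightarrow> D p p = H0"
  using inv_pm by (simp add: inv_pm_group_def pm_space_def)

lemma D_commute: "p \<in> carrier G \<Longrightarrow> q \<in> carrier G \<Longrightarrow> D p q = D q p"
  using inv_pm by (simp add: inv_pm_group_def pm_space_def)

lemma D_triangle:
  "p \<in> carrier G \<Longrightarrow> q \<in> carrier G \<Longrightarrow> r \<in> carrier G \<Longrightarrow> T (D p q) (D q r) \<le> D p r"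
  using inv_pm by (simp add: inv_pm_group_def pm_space_def)

lemma D_mult_right:
  "p \<in> carrier G \<Longrightarrow> q \<in> carrier G \<Longrightarrow> r \<in> carrier G \<Longrightarrow> D (p \<otimes> r) (q \<otimes> r) = D p q"
  using inv_pm by (simp add: inv_pm_group_def)

lemma D_mult_left:
  "p \<in> carrier G \<Longrightarrow> q \<in> carrier G \<Longrightarrow> r \<in> carrier G \<Longrightarrow> D (r \<otimes> p) (r \<otimes> q) = D p q"
  using inv_pm by (simp add: inv_pm_group_def)

lemma D_mult:
  assumes "a \<in> carrier G" "b \<in> carrier G" "y \<in> carrier G" "z \<in> carrier G"
  shows "T (D a y) (D b z) \<le> D (a \<otimes> b) (y \<otimes> z)"
  using D_triangle[of "a \<otimes> b" "y \<otimes> b" "y \<otimes> z"] D_mult_right[of a y b] D_mult_left[of b z y] assms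
  by simp

lemma D_inv: "p \<in> carrier G \<Longrightarrow> x \<in> carrier G \<Longrightarrow> D (inv p) x = D p (inv x)"
  using D_mult_left[of "inv p" x p] D_mult_right[of \<one> "p \<otimes> x" "inv x"] D_commute[of p "inv x"]
  by (simp add: m_assoc)

definition represents :: "('a \<Rightarrow> dfun) \<Rightarrow> (nat \<Rightarrow> 'a) \<Rightarrow> bool" where
  "represents f a \<longleftrightarrow> pm_cauchy (carrier G) D a \<and>
     (\<forall>x\<in>carrier G. wconv (\<lambda>n. D (a n) x) (f x) sequentially)"

lemma represents_in_carrier: "represents f a \<Longrightarrow> a n \<in> carrier G"
  by (simp add: represents_def pm_cauchy_def)

lemma represents_cauchy: "represents f a \<Longrightarrow> pm_cauchy (carrier G) D a"
  by (simp add: represents_def)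

lemma represents_wconv: "represents f a \<Longrightarrow> x \<in> carrier G \<Longrightarrow> wconv (\<lambda>n. D (a n) x) (f x) sequentially"
  by (simp add: represents_def)

lemma Pi_set_extensional: "f \<in> PiG \<Longrightarrow> f \<in> extensional (carrier G)"
  by (simp add: Pi_set_def)

lemma Pi_set_Delta_plus: "f \<in> PiG \<Longrightarrow> x \<in> carrier G \<Longrightarrow> f x \<in> Delta_plus"
  by (simp add: Pi_set_def prob_lip1_def)

lemma Pi_set_represents:
  assumes "f \<in> PiG"
  obtains a where "represents f a"
  using assms by (auto simp: Pi_set_def represents_def)

text \<open>The Lipschitz condition in the definition of \<open>\<Pi>(G)\<close> is automatic: it passes to the
  limit from the triangle inequality for \<open>D\<close>.\<close>
lemma Pi_setI:
  assumes ext: "f \<in> extensional (carrier G)" and f: "\<And>x. x \<in> carrier G \<Longrightarrow> f x \<in> Delta_plus"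
    and a: "represents f a"
  shows "f \<in> PiG"
proof -
  have "T (D x y) (f y) \<le> f x" if xy: "x \<in> carrier G" "y \<in> carrier G" for x y
  proof -
    have "wconv (\<lambda>n. T (D (a n) y) (D y x)) (T (f y) (D y x)) sequentially"
      by (rule T_wconv)
        (use xy a in \<open>auto intro: D_in_Delta_plus represents_in_carrier f represents_wconv wconv_const\<close>)
    moreover have "T (D (a n) y) (D y x) \<le> D (a n) x" for n
      using D_triangle[of "a n" y x] xy represents_in_carrier[OF a] by blast
    ultimately have "T (f y) (D y x) \<le> f x"
      using wconv_le[OF _ represents_wconv[OF a xy(1)]] xy f D_in_Delta_plus T_in_Delta_plus by blast
    then show ?thesis using T_commute D_commute xy f D_in_Delta_plus by metis
  qed
  then show ?thesis
    using ext f a unfolding Pi_set_def prob_lip1_def represents_def by blast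
qed

lemma Pi_set_eqI:
  assumes "f \<in> PiG" "g \<in> PiG" "represents f a" "represents g a"
  shows "f = g"
proof (rule extensionalityI[OF Pi_set_extensional[OF assms(1)] Pi_set_extensional[OF assms(2)]])
  fix x assume "x \<in> carrier G"
  then show "f x = g x"
    using wconv_unique[OF represents_wconv[OF assms(3)] represents_wconv[OF assms(4)]]
      Pi_set_Delta_plus assms(1,2) by blast
qed

lemma represents_wconv_H0:
  assumes a: "represents f a" and f: "\<And>x. x \<in> carrier G \<Longrightarrow> f x \<in> Delta_plus"
  shows "wconv (\<lambda>m. f (a m)) H0 sequentially"
  unfolding wconv_H0_iff[OF f[OF represents_in_carrier[OF a]]]
proof (intro allI impI)
  fix t c :: real assume t: "0 < t" and c: "c < 1"
  define c' where "c' = (c + 1) / 2"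
  have c': "c < c'" "c' < 1" using c by (auto simp: c'_def)
  have D_a: "\<And>i. (\<lambda>(n, p). D (a n) (a p)) i \<in> Delta_plus"
    using D_in_Delta_plus represents_in_carrier[OF a] by auto
  have "wconv (\<lambda>(n, p). D (a n) (a p)) H0 (sequentially \<times>\<^sub>F sequentially)"
    using represents_cauchy[OF a] by (simp add: pm_cauchy_def)
  moreover have "0 < t / 2" using t by simp
  ultimately have "eventually (\<lambda>i. c' < (\<lambda>(n, p). D (a n) (a p)) i (ereal (t/2))) (sequentially \<times>\<^sub>F sequentially)"
    using c' unfolding wconv_H0_iff[OF D_a] by blast
  then obtain N where N: "\<And>n m. N \<le> n \<Longrightarrow> N \<le> m \<Longrightarrow> c' < D (a n) (a m) (ereal (t/2))"
    unfolding eventually_prod_sequentially by auto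
  show "eventually (\<lambda>m. c < f (a m) (ereal t)) sequentially"
    unfolding eventually_sequentially
  proof (intro exI allI impI)
    fix m assume "N \<le> m"
    have "c' \<le> f (a m) (ereal t)"
    proof (rule wconv_lower_bound[OF represents_wconv[OF a represents_in_carrier[OF a]]])
      show "eventually (\<lambda>n. c' \<le> D (a n) (a m) (ereal (t / 2))) sequentially"
        unfolding eventually_sequentially using N \<open>N \<le> m\<close> less_imp_le by blast
    qed (use t f D_in_Delta_plus represents_in_carrier[OF a] in auto)
    then show "c < f (a m) (ereal t)" using c' by simp
  qed
qed

lemma delta_map_represents: "b \<in> carrier G \<Longrightarrow> represents (deltaG b) (\<lambda>n. b)"
  unfolding represents_def pm_cauchy_def delta_map_def
  using D_self D_commute by (auto simp: wconv_def)

lemma delta_map_in_Pi_set: "b \<in> carrier G \<Longrightarrow> deltaG b \<in> PiG"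
  by (rule Pi_setI[OF _ _ delta_map_represents]) (auto simp: delta_map_def D_in_Delta_plus)


lemma represents_wconv_swap:
  "represents f a \<Longrightarrow> x \<in> carrier G \<Longrightarrow> wconv (\<lambda>n. D x (a n)) (f x) sequentially"
  using represents_wconv[of f a x] D_commute[OF _ represents_in_carrier] by simp

lemma subseq_limit_DD_le:
  assumes f: "f \<in> PiG" and g: "g \<in> PiG" and a: "represents f a" and b: "represents g b"
    and \<sigma>: "strict_mono \<sigma>" and K: "K \<in> Delta_plus"
    and lim: "wconv (\<lambda>n. D (a (\<sigma> n)) (b (\<sigma> n))) K sequentially"
  shows "T (f (a m)) K \<le> g (a m)"
proof -
  have aG: "a n \<in> carrier G" "b n \<in> carrier G" for n
    using represents_in_carrier a b by auto
  have fD: "f x \<in> Delta_plus" "g x \<in> Delta_plus" if "x \<in> carrier G" for x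
    using Pi_set_Delta_plus f g that by auto
  have "T K (f (a m)) \<le> g (a m)"
  proof (rule wconv_le[OF _ wconv_subseq[OF represents_wconv[OF b aG(1)] \<sigma>] T_in_Delta_plus[OF K] fD(2)])
    have lim': "wconv (\<lambda>n. D (b (\<sigma> n)) (a (\<sigma> n))) K sequentially"
      using lim D_commute[OF aG] by simp
    show "wconv (\<lambda>n. T (D (b (\<sigma> n)) (a (\<sigma> n))) (D (a (\<sigma> n)) (a m))) (T K (f (a m))) sequentially"
      by (rule T_wconv[OF _ _ K fD(1) lim' wconv_subseq[OF represents_wconv[OF a aG(1)] \<sigma>]])
        (simp_all add: D_in_Delta_plus aG)
    show "T (D (b (\<sigma> n)) (a (\<sigma> n))) (D (a (\<sigma> n)) (a m)) \<le> D (b (\<sigma> n)) (a m)" for n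
      using D_triangle aG by blast
  qed (simp_all add: aG fD)
  then show ?thesis using T_commute[OF K fD(1)[OF aG(1)]] by simp
qed

lemma DD_eq_subseq_limit:
  assumes f: "f \<in> PiG" and g: "g \<in> PiG" and a: "represents f a" and b: "represents g b"
    and \<sigma>: "strict_mono \<sigma>" and K: "K \<in> Delta_plus"
    and lim: "wconv (\<lambda>n. D (a (\<sigma> n)) (b (\<sigma> n))) K sequentially"
  shows "DDG f g = K"
  unfolding DD_def
proof (rule dsup_eq_wconv_limit[OF _ K _ T_twice_wconv_H0_left[where Fs="\<lambda>m. f (a m)"]])
  have aG: "a n \<in> carrier G" "b n \<in> carrier G" for n
    using represents_in_carrier a b by auto
  have fD: "f x \<in> Delta_plus" "g x \<in> Delta_plus" if "x \<in> carrier G" for x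
    using Pi_set_Delta_plus f g that by auto
  show "{T (f x) (g x) |x. x \<in> carrier G} \<subseteq> Delta_plus"
    using fD T_in_Delta_plus by auto
  show "F \<le> K" if F: "F \<in> {T (f x) (g x) |x. x \<in> carrier G}" for F
  proof -
    obtain x where x: "x \<in> carrier G" "F = T (f x) (g x)" using F by blast
    have "wconv (\<lambda>n. T (D (a (\<sigma> n)) x) (D x (b (\<sigma> n)))) (T (f x) (g x)) sequentially"
      by (rule T_wconv[OF _ _ fD[OF x(1)] wconv_subseq[OF represents_wconv[OF a x(1)] \<sigma>]
            wconv_subseq[OF represents_wconv_swap[OF b x(1)] \<sigma>]])
        (simp_all add: D_in_Delta_plus aG x(1))
    moreover have "T (D (a (\<sigma> n)) x) (D x (b (\<sigma> n))) \<le> D (a (\<sigma> n)) (b (\<sigma> n))" for n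
      using D_triangle x(1) aG by blast
    ultimately show ?thesis
      unfolding x(2) by (rule wconv_le[OF _ lim T_in_Delta_plus[OF fD[OF x(1)]] K])
  qed
  have gK: "T (f (a m)) K \<le> g (a m)" for m
    by (rule subseq_limit_DD_le[OF f g a b \<sigma> K lim])
  show "\<exists>F\<in>{T (f x) (g x) |x. x \<in> carrier G}. T (f (a m)) (T (f (a m)) K) \<le> F" for m
  proof
    show "T (f (a m)) (g (a m)) \<in> {T (f x) (g x) |x. x \<in> carrier G}" using aG by blast
    show "T (f (a m)) (T (f (a m)) K) \<le> T (f (a m)) (g (a m))"
      by (rule T_mono) (use fD aG K gK in \<open>auto intro: T_in_Delta_plus\<close>)
  qed
qed (use Pi_set_Delta_plus[OF f] represents_in_carrier[OF a] represents_wconv_H0[OF a] K in auto)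

lemma DD_wconv:
  assumes f: "f \<in> PiG" and g: "g \<in> PiG" and a: "represents f a" and b: "represents g b"
  shows "DDG f g \<in> Delta_plus \<and> wconv (\<lambda>n. D (a n) (b n)) (DDG f g) sequentially"
  by (rule wconv_if_subseq_limits_eq)
    (use D_in_Delta_plus represents_in_carrier[OF a] represents_in_carrier[OF b]
      DD_eq_subseq_limit[OF assms] in auto)

text \<open>By invariance \<open>D (b n) (inv (a m) \<otimes> x) = D (a m \<otimes> b n) x\<close>, so the triangle inequality
  through \<open>a n \<otimes> b n\<close> bounds \<open>g (inv (a m) \<otimes> x)\<close> from below.\<close>
lemma subseq_limit_odot_le:
  assumes f: "f \<in> PiG" and g: "g \<in> PiG" and a: "represents f a" and b: "represents g b"
    and x: "x \<in> carrier G" and \<sigma>: "strict_mono \<sigma>" and K: "K \<in> Delta_plus"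
    and lim: "wconv (\<lambda>n. D (a (\<sigma> n) \<otimes> b (\<sigma> n)) x) K sequentially"
  shows "T (f (a m)) K \<le> g (inv (a m) \<otimes> x)"
proof -
  have aG: "a n \<in> carrier G" "b n \<in> carrier G" for n
    using represents_in_carrier a b by auto
  have fD: "f y \<in> Delta_plus" "g y \<in> Delta_plus" if "y \<in> carrier G" for y
    using Pi_set_Delta_plus f g that by auto
  show ?thesis
  proof (rule wconv_le[OF _ wconv_subseq[OF represents_wconv[OF b] \<sigma>] T_in_Delta_plus[OF fD(1) K] fD(2)])
    show "wconv (\<lambda>n. T (D (a m) (a (\<sigma> n))) (D (a (\<sigma> n) \<otimes> b (\<sigma> n)) x)) (T (f (a m)) K) sequentially"
      by (rule T_wconv[OF _ _ fD(1) K wconv_subseq[OF represents_wconv_swap[OF a aG(1)] \<sigma>] lim])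
        (simp_all add: D_in_Delta_plus aG x)
    show "T (D (a m) (a (\<sigma> n))) (D (a (\<sigma> n) \<otimes> b (\<sigma> n)) x) \<le> D (b (\<sigma> n)) (inv a m \<otimes> x)" for n
    proof -
      have "D (a m) (a (\<sigma> n)) = D (a m \<otimes> b (\<sigma> n)) (a (\<sigma> n) \<otimes> b (\<sigma> n))"
        using D_mult_right aG by simp
      moreover have "D (b (\<sigma> n)) (inv a m \<otimes> x) = D (a m \<otimes> b (\<sigma> n)) x"
        using D_mult_left[of "b (\<sigma> n)" "inv a m \<otimes> x" "a m"] aG x by (simp add: m_assoc[symmetric])
      ultimately show ?thesis using D_triangle aG x by simp
    qed
  qed (use aG x in simp_all)
qed

lemma odot_eq_subseq_limit:
  assumes f: "f \<in> PiG" and g: "g \<in> PiG" and a: "represents f a" and b: "represents g b"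
    and x: "x \<in> carrier G" and \<sigma>: "strict_mono \<sigma>" and K: "K \<in> Delta_plus"
    and lim: "wconv (\<lambda>n. D (a (\<sigma> n) \<otimes> b (\<sigma> n)) x) K sequentially"
  shows "odotG f g x = K"
  unfolding odot_def restrict_apply'[OF x]
proof (rule dsup_eq_wconv_limit[OF _ K _ T_twice_wconv_H0_left[where Fs="\<lambda>m. f (a m)"]])
  let ?A = "{T (f y) (g z) |y z. y \<in> carrier G \<and> z \<in> carrier G \<and> y \<otimes> z = x}"
  have aG: "a n \<in> carrier G" "b n \<in> carrier G" for n
    using represents_in_carrier a b by auto
  have fD: "f y \<in> Delta_plus" "g y \<in> Delta_plus" if "y \<in> carrier G" for y
    using Pi_set_Delta_plus f g that by auto
  show "?A \<subseteq> Delta_plus"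
    using fD T_in_Delta_plus by auto
  show "F \<le> K" if F: "F \<in> ?A" for F
  proof -
    obtain y z where yz: "y \<in> carrier G" "z \<in> carrier G" "y \<otimes> z = x" "F = T (f y) (g z)"
      using F by blast
    have "wconv (\<lambda>n. T (D (a (\<sigma> n)) y) (D (b (\<sigma> n)) z)) (T (f y) (g z)) sequentially"
      by (rule T_wconv[OF _ _ fD(1)[OF yz(1)] fD(2)[OF yz(2)] wconv_subseq[OF represents_wconv[OF a yz(1)] \<sigma>]
            wconv_subseq[OF represents_wconv[OF b yz(2)] \<sigma>]])
        (simp_all add: D_in_Delta_plus aG yz(1,2))
    moreover have "T (D (a (\<sigma> n)) y) (D (b (\<sigma> n)) z) \<le> D (a (\<sigma> n) \<otimes> b (\<sigma> n)) x" for n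
      using D_mult[OF aG(1) aG(2) yz(1,2)] yz(3) by simp
    ultimately show ?thesis
      unfolding yz(4) by (rule wconv_le[OF _ lim T_in_Delta_plus[OF fD(1)[OF yz(1)] fD(2)[OF yz(2)]] K])
  qed
  have gK: "T (f (a m)) K \<le> g (inv (a m) \<otimes> x)" for m
    by (rule subseq_limit_odot_le[OF f g a b x \<sigma> K lim])
  show "\<exists>F\<in>?A. T (f (a m)) (T (f (a m)) K) \<le> F" for m
  proof
    show "T (f (a m)) (g (inv (a m) \<otimes> x)) \<in> ?A"
      using aG x by (force simp: m_assoc[symmetric])
    show "T (f (a m)) (T (f (a m)) K) \<le> T (f (a m)) (g (inv (a m) \<otimes> x))"
      by (rule T_mono) (use fD aG x K gK in \<open>auto intro: T_in_Delta_plus\<close>)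
  qed
qed (use Pi_set_Delta_plus[OF f] represents_in_carrier[OF a] represents_wconv_H0[OF a] K in auto)

lemma odot_wconv:
  assumes f: "f \<in> PiG" and g: "g \<in> PiG" and a: "represents f a" and b: "represents g b"
    and x: "x \<in> carrier G"
  shows "odotG f g x \<in> Delta_plus \<and> wconv (\<lambda>n. D (a n \<otimes> b n) x) (odotG f g x) sequentially"
  by (rule wconv_if_subseq_limits_eq)
    (use D_in_Delta_plus represents_in_carrier[OF a] represents_in_carrier[OF b] x
      odot_eq_subseq_limit[OF assms] in auto)


lemma pm_cauchy_mult:
  assumes a: "pm_cauchy (carrier G) D a" and b: "pm_cauchy (carrier G) D b"
  shows "pm_cauchy (carrier G) D (\<lambda>n. a n \<otimes> b n)"
proof -
  have aG: "a n \<in> carrier G" "b n \<in> carrier G" for n using a b by (auto simp: pm_cauchy_def)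
  define Fa where "Fa = (\<lambda>(n, p). D (a n) (a p))"
  define Fb where "Fb = (\<lambda>(n, p). D (b n) (b p))"
  define Fab where "Fab = (\<lambda>(n, p). D (a n \<otimes> b n) (a p \<otimes> b p))"
  have Fa: "Fa i \<in> Delta_plus" and Fb: "Fb i \<in> Delta_plus" and Fab: "Fab i \<in> Delta_plus" for i
    unfolding Fa_def Fb_def Fab_def using D_in_Delta_plus aG by (auto split: prod.split)
  have "wconv (\<lambda>i. T (Fa i) (Fb i)) H0 (sequentially \<times>\<^sub>F sequentially)"
    by (rule T_wconv_H0[OF Fa Fb]) (use a b in \<open>auto simp: pm_cauchy_def Fa_def Fb_def\<close>)
  moreover have "T (Fa i) (Fb i) \<le> Fab i" for i
    unfolding Fa_def Fb_def Fab_def using D_mult aG by (auto split: prod.split)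
  ultimately have "wconv Fab H0 (sequentially \<times>\<^sub>F sequentially)"
    by (intro wconv_H0_squeeze[OF Fab, of "\<lambda>i. T (Fa i) (Fb i)"]) (auto intro: T_in_Delta_plus Fa Fb)
  then show ?thesis using aG by (simp add: pm_cauchy_def Fab_def)
qed

lemma represents_odot:
  assumes "f \<in> PiG" "g \<in> PiG" and a: "represents f a" and b: "represents g b"
  shows "represents (odotG f g) (\<lambda>n. a n \<otimes> b n)"
  unfolding represents_def
  using pm_cauchy_mult[OF represents_cauchy[OF a] represents_cauchy[OF b]] odot_wconv[OF assms]
  by blast

lemma odot_in_Pi_set:
  assumes f: "f \<in> PiG" and g: "g \<in> PiG"
  shows "odotG f g \<in> PiG"
proof -
  obtain a b where a: "represents f a" and b: "represents g b"
    using Pi_set_represents f g by metis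
  show ?thesis
    by (rule Pi_setI[OF _ _ represents_odot[OF f g a b]])
      (use odot_wconv[OF f g a b] in \<open>auto simp: odot_def\<close>)
qed

definition Pi_inv :: "('a \<Rightarrow> dfun) \<Rightarrow> ('a \<Rightarrow> dfun)" where
  "Pi_inv f = restrict (\<lambda>x. f (inv x)) (carrier G)"

lemma represents_Pi_inv:
  assumes a: "represents f a"
  shows "represents (Pi_inv f) (\<lambda>n. inv (a n))"
proof -
  have aG: "a n \<in> carrier G" for n using represents_in_carrier[OF a] .
  have "(\<lambda>(n, p). D (inv (a n)) (inv (a p))) = (\<lambda>(n, p). D (a n) (a p))"
    using D_inv aG by (auto simp: fun_eq_iff)
  then have "pm_cauchy (carrier G) D (\<lambda>n. inv (a n))"
    using represents_cauchy[OF a] aG unfolding pm_cauchy_def by simp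
  moreover have "wconv (\<lambda>n. D (inv (a n)) x) (Pi_inv f x) sequentially" if x: "x \<in> carrier G" for x
    using represents_wconv[OF a, of "inv x"] D_inv[OF aG x] x by (simp add: Pi_inv_def)
  ultimately show ?thesis unfolding represents_def by blast
qed

lemma Pi_inv_in_Pi_set: "f \<in> PiG \<Longrightarrow> Pi_inv f \<in> PiG"
  by (rule Pi_set_represents, assumption, rule Pi_setI[OF _ _ represents_Pi_inv])
    (auto simp: Pi_inv_def Pi_set_Delta_plus)

lemma odot_assoc:
  assumes f: "f \<in> PiG" and g: "g \<in> PiG" and h: "h \<in> PiG"
  shows "odotG (odotG f g) h = odotG f (odotG g h)"
proof -
  obtain a b c where a: "represents f a" and b: "represents g b" and c: "represents h c"
    using Pi_set_represents f g h by metis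
  have "represents (odotG (odotG f g) h) (\<lambda>n. (a n \<otimes> b n) \<otimes> c n)"
    by (intro represents_odot odot_in_Pi_set assms a b c)
  moreover have "represents (odotG f (odotG g h)) (\<lambda>n. (a n \<otimes> b n) \<otimes> c n)"
    using represents_odot[OF f odot_in_Pi_set[OF g h] a represents_odot[OF g h b c]]
      represents_in_carrier[OF a] represents_in_carrier[OF b] represents_in_carrier[OF c]
    by (simp add: m_assoc)
  ultimately show ?thesis
    by (intro Pi_set_eqI odot_in_Pi_set assms)
qed

lemma delta_one_odot: "f \<in> PiG \<Longrightarrow> odotG (deltaG \<one>) f = f"
proof -
  assume f: "f \<in> PiG"
  then obtain a where a: "represents f a" by (rule Pi_set_represents)
  have "represents (odotG (deltaG \<one>) f) (\<lambda>n. \<one> \<otimes> a n)"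
    by (rule represents_odot[OF delta_map_in_Pi_set f delta_map_represents a]) simp_all
  then have "represents (odotG (deltaG \<one>) f) a"
    using represents_in_carrier[OF a] by simp
  then show ?thesis
    by (rule Pi_set_eqI[OF odot_in_Pi_set[OF delta_map_in_Pi_set[OF one_closed] f] f _ a])
qed

lemma Pi_inv_odot: "f \<in> PiG \<Longrightarrow> odotG (Pi_inv f) f = deltaG \<one>"
proof -
  assume f: "f \<in> PiG"
  then obtain a where a: "represents f a" by (rule Pi_set_represents)
  have "represents (odotG (Pi_inv f) f) (\<lambda>n. inv (a n) \<otimes> a n)"
    by (rule represents_odot[OF Pi_inv_in_Pi_set[OF f] f represents_Pi_inv[OF a] a])
  then have "represents (odotG (Pi_inv f) f) (\<lambda>n. \<one>)"
    using represents_in_carrier[OF a] by simp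
  then show ?thesis
    by (rule Pi_set_eqI[OF odot_in_Pi_set[OF Pi_inv_in_Pi_set[OF f] f]
          delta_map_in_Pi_set[OF one_closed] _ delta_map_represents[OF one_closed]])
qed

lemma group_Pi_group: "group (Pi_group G D T)"
proof (rule groupI)
  show "\<exists>g\<in>carrier (Pi_group G D T). g \<otimes>\<^bsub>Pi_group G D T\<^esub> f = \<one>\<^bsub>Pi_group G D T\<^esub>"
    if "f \<in> carrier (Pi_group G D T)" for f
    using that Pi_inv_in_Pi_set Pi_inv_odot by (auto simp: Pi_group_def)
qed (auto simp: Pi_group_def odot_in_Pi_set delta_map_in_Pi_set odot_assoc delta_one_odot)


lemma DD_in_Delta_plus: "f \<in> PiG \<Longrightarrow> g \<in> PiG \<Longrightarrow> DDG f g \<in> Delta_plus"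
  by (metis DD_wconv Pi_set_represents)

lemma DD_eqI:
  assumes "f \<in> PiG" "g \<in> PiG" "represents f a" "represents g b"
    and "K \<in> Delta_plus" "wconv (\<lambda>n. D (a n) (b n)) K sequentially"
  shows "DDG f g = K"
  using wconv_unique[OF conjunct2[OF DD_wconv[OF assms(1-4)]] assms(6)] DD_in_Delta_plus assms
  by blast

lemma DD_commute:
  assumes f: "f \<in> PiG" and g: "g \<in> PiG"
  shows "DDG f g = DDG g f"
proof -
  obtain a b where a: "represents f a" and b: "represents g b"
    using Pi_set_represents f g by metis
  have "(\<lambda>n. D (b n) (a n)) = (\<lambda>n. D (a n) (b n))"
    using D_commute represents_in_carrier a b by auto
  then show ?thesis
    using DD_eqI[OF g f b a DD_in_Delta_plus[OF f g]] DD_wconv[OF f g a b] by simp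
qed

lemma DD_self: "f \<in> PiG \<Longrightarrow> DDG f f = H0"
proof -
  assume f: "f \<in> PiG"
  then obtain a where a: "represents f a" by (rule Pi_set_represents)
  have "(\<lambda>n. D (a n) (a n)) = (\<lambda>n. H0)"
    using D_self represents_in_carrier[OF a] by auto
  then show ?thesis
    using DD_eqI[OF f f a a H0_in_Delta_plus] wconv_const[of H0 sequentially] by simp
qed

lemma DD_triangle:
  assumes f: "f \<in> PiG" and g: "g \<in> PiG" and h: "h \<in> PiG"
  shows "T (DDG f g) (DDG g h) \<le> DDG f h"
proof -
  obtain a b c where a: "represents f a" and b: "represents g b" and c: "represents h c"
    using Pi_set_represents f g h by metis
  have aG: "a n \<in> carrier G" "b n \<in> carrier G" "c n \<in> carrier G" for n
    using represents_in_carrier a b c by auto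
  show ?thesis
  proof (rule wconv_le[OF _ conjunct2[OF DD_wconv[OF f h a c]]])
    show "wconv (\<lambda>n. T (D (a n) (b n)) (D (b n) (c n))) (T (DDG f g) (DDG g h)) sequentially"
      by (rule T_wconv[OF _ _ DD_in_Delta_plus[OF f g] DD_in_Delta_plus[OF g h]
            conjunct2[OF DD_wconv[OF f g a b]] conjunct2[OF DD_wconv[OF g h b c]]])
        (simp_all add: D_in_Delta_plus aG)
  qed (use D_triangle aG DD_in_Delta_plus f g h in \<open>auto intro: T_in_Delta_plus\<close>)
qed

lemma DD_eq_H0_imp_eq:
  assumes f: "f \<in> PiG" and g: "g \<in> PiG" and H0: "DDG f g = H0"
  shows "f = g"
proof -
  have le: "g' x \<le> f' x" if f': "f' \<in> PiG" and g': "g' \<in> PiG" and "DDG f' g' = H0"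
    and x: "x \<in> carrier G" for f' g' x
  proof -
    obtain a b where a: "represents f' a" and b: "represents g' b"
      using Pi_set_represents f' g' by metis
    have aG: "a n \<in> carrier G" "b n \<in> carrier G" for n
      using represents_in_carrier a b by auto
    have "wconv (\<lambda>n. T (D (a n) (b n)) (D (b n) x)) (g' x) sequentially"
      by (rule T_wconv_H0_left[OF _ _ Pi_set_Delta_plus[OF g' x] _ represents_wconv[OF b x]])
        (use DD_wconv[OF f' g' a b] \<open>DDG f' g' = H0\<close> aG x D_in_Delta_plus in auto)
    then show ?thesis
      by (rule wconv_le[OF _ represents_wconv[OF a x] Pi_set_Delta_plus[OF g' x] Pi_set_Delta_plus[OF f' x]])
        (use D_triangle aG x in auto)
  qed
  show "f = g"
  proof (rule extensionalityI[OF Pi_set_extensional[OF f] Pi_set_extensional[OF g]])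
    fix x assume "x \<in> carrier G"
    then show "f x = g x"
      using le[OF f g H0] le[OF g f] H0 DD_commute[OF f g] by (simp add: order_antisym)
  qed
qed

lemma DD_odot_right:
  assumes f: "f \<in> PiG" and g: "g \<in> PiG" and h: "h \<in> PiG"
  shows "DDG (odotG f h) (odotG g h) = DDG f g"
proof -
  obtain a b c where a: "represents f a" and b: "represents g b" and c: "represents h c"
    using Pi_set_represents f g h by metis
  have "(\<lambda>n. D (a n \<otimes> c n) (b n \<otimes> c n)) = (\<lambda>n. D (a n) (b n))"
    using D_mult_right represents_in_carrier a b c by auto
  then show ?thesis
    using DD_eqI[OF odot_in_Pi_set[OF f h] odot_in_Pi_set[OF g h] represents_odot[OF f h a c]
        represents_odot[OF g h b c] DD_in_Delta_plus[OF f g]] DD_wconv[OF f g a b]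
    by simp
qed

lemma DD_odot_left:
  assumes f: "f \<in> PiG" and g: "g \<in> PiG" and h: "h \<in> PiG"
  shows "DDG (odotG h f) (odotG h g) = DDG f g"
proof -
  obtain a b c where a: "represents f a" and b: "represents g b" and c: "represents h c"
    using Pi_set_represents f g h by metis
  have "(\<lambda>n. D (c n \<otimes> a n) (c n \<otimes> b n)) = (\<lambda>n. D (a n) (b n))"
    using D_mult_left represents_in_carrier a b c by auto
  then show ?thesis
    using DD_eqI[OF odot_in_Pi_set[OF h f] odot_in_Pi_set[OF h g] represents_odot[OF h f c a]
        represents_odot[OF h g c b] DD_in_Delta_plus[OF f g]] DD_wconv[OF f g a b]
    by simp
qed

lemma inv_pm_group_Pi_group: "inv_pm_group (Pi_group G D T) DDG T"
  unfolding inv_pm_group_def pm_space_def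
  using group_Pi_group triangle DD_in_Delta_plus DD_self DD_eq_H0_imp_eq DD_commute DD_triangle
    DD_odot_right DD_odot_left
  by (auto simp: Pi_group_def)


lemma DD_delta_map:
  assumes f: "f \<in> PiG" and b: "b \<in> carrier G"
  shows "DDG f (deltaG b) = f b"
proof -
  obtain a where a: "represents f a" using Pi_set_represents f by blast
  show ?thesis
    by (rule DD_eqI[OF f delta_map_in_Pi_set[OF b] a delta_map_represents[OF b]
          Pi_set_Delta_plus[OF f b] represents_wconv[OF a b]])
qed

lemma DD_delta_map_delta_map:
  assumes "a \<in> carrier G" "b \<in> carrier G"
  shows "DDG (deltaG a) (deltaG b) = D a b"
  by (rule DD_eqI[OF delta_map_in_Pi_set delta_map_in_Pi_set delta_map_represents delta_map_represents
        D_in_Delta_plus wconv_const]) (use assms in simp_all)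

lemma pm_cauchy_wconv_exists:
  assumes c: "pm_cauchy (carrier G) D c" and x: "x \<in> carrier G"
  shows "\<exists>K\<in>Delta_plus. wconv (\<lambda>n. D (c n) x) K sequentially"
proof (rule wconv_if_subseq_limits_le)
  have cG: "c n \<in> carrier G" for n using c by (simp add: pm_cauchy_def)
  show "D (c n) x \<in> Delta_plus" for n using D_in_Delta_plus cG x by blast
  fix \<sigma>1 \<sigma>2 K1 K2
  assume \<sigma>: "strict_mono \<sigma>1" "strict_mono \<sigma>2" and K: "K1 \<in> Delta_plus" "K2 \<in> Delta_plus"
    and lim: "wconv (\<lambda>n. D (c (\<sigma>1 n)) x) K1 sequentially" "wconv (\<lambda>n. D (c (\<sigma>2 n)) x) K2 sequentially"
  have "filterlim (\<lambda>i. (\<sigma>2 i, \<sigma>1 i)) (sequentially \<times>\<^sub>F sequentially) sequentially"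
    by (intro filterlim_Pair filterlim_subseq \<sigma>)
  then have "wconv (\<lambda>i. (\<lambda>(n, p). D (c n) (c p)) (\<sigma>2 i, \<sigma>1 i)) H0 sequentially"
    by (rule wconv_compose[rotated]) (use c in \<open>simp add: pm_cauchy_def\<close>)
  then have "wconv (\<lambda>n. T (D (c (\<sigma>2 n)) (c (\<sigma>1 n))) (D (c (\<sigma>1 n)) x)) K1 sequentially"
    by (intro T_wconv_H0_left[OF _ _ K(1) _ lim(1)]) (simp_all add: D_in_Delta_plus cG x)
  then show "K1 \<le> K2"
    by (rule wconv_le[OF _ lim(2) K]) (use D_triangle cG x in blast)
qed

lemma pm_cauchy_represents:
  assumes b: "pm_cauchy (carrier G) D b"
  obtains f where "f \<in> PiG" "represents f b"
proof -
  define f where "f = restrict (\<lambda>x. SOME K. K \<in> Delta_plus \<and> wconv (\<lambda>n. D (b n) x) K sequentially) (carrier G)"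
  have fx: "f x \<in> Delta_plus \<and> wconv (\<lambda>n. D (b n) x) (f x) sequentially" if x: "x \<in> carrier G" for x
  proof -
    have "\<exists>K. K \<in> Delta_plus \<and> wconv (\<lambda>n. D (b n) x) K sequentially"
      using pm_cauchy_wconv_exists[OF b x] by blast
    then show ?thesis unfolding f_def restrict_apply'[OF x] by (rule someI_ex)
  qed
  then have "represents f b" unfolding represents_def using b by blast
  moreover have "f \<in> PiG"
    by (rule Pi_setI[OF _ _ \<open>represents f b\<close>]) (use fx in \<open>auto simp: f_def\<close>)
  ultimately show ?thesis using that by blast
qed

lemma Pi_set_large_value:
  assumes f: "f \<in> PiG" and "0 < e"
  obtains x where "x \<in> carrier G" "1 - e < f x (ereal e)"
proof -
  obtain a where a: "represents f a" using Pi_set_represents f by metis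
  have "eventually (\<lambda>m. 1 - e < f (a m) (ereal e)) sequentially"
    using represents_wconv_H0[OF a Pi_set_Delta_plus[OF f]] \<open>0 < e\<close>
      wconv_H0_iff[of "\<lambda>m. f (a m)"] Pi_set_Delta_plus[OF f] represents_in_carrier[OF a] by simp
  then show ?thesis using that represents_in_carrier[OF a] by (auto simp: eventually_sequentially)
qed

text \<open>\<open>D (b k) (b l) = DD (\<delta> (b k)) (\<delta> (b l))\<close> is bounded below by the triangle inequality
  through \<open>z k\<close> and \<open>z l\<close>, where \<open>DD (z k) (\<delta> (b k)) = z k (b k)\<close>.\<close>
lemma pm_cauchy_of_Pi_set_cauchy:
  assumes z: "pm_cauchy PiG DDG z" and bG: "\<And>k. b k \<in> carrier G"
    and lim: "wconv (\<lambda>k. z k (b k)) H0 sequentially"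
  shows "pm_cauchy (carrier G) D b"
  unfolding pm_cauchy_def
proof (intro conjI allI bG)
  have zP: "z k \<in> PiG" for k using z by (simp add: pm_cauchy_def)
  define \<phi> where "\<phi> k = z k (b k)" for k
  have \<phi>: "\<phi> k \<in> Delta_plus" for k unfolding \<phi>_def using Pi_set_Delta_plus[OF zP bG] .
  have \<phi>_right: "\<phi> k = DDG (z k) (deltaG (b k))" for k
    unfolding \<phi>_def using DD_delta_map[OF zP bG] by simp
  have \<phi>_left: "\<phi> k = DDG (deltaG (b k)) (z k)" for k
    unfolding \<phi>_right using DD_commute[OF zP delta_map_in_Pi_set[OF bG]] by simp
  define Gs where "Gs = (\<lambda>(k, l). T (\<phi> k) (T (DDG (z k) (z l)) (\<phi> l)))"
  have Gs: "Gs i \<in> Delta_plus" for i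
    unfolding Gs_def using \<phi> T_in_Delta_plus DD_in_Delta_plus zP by (auto split: prod.split)
  have "wconv (\<lambda>i. T (\<phi> (fst i)) (T (DDG (z (fst i)) (z (snd i))) (\<phi> (snd i)))) H0 (sequentially \<times>\<^sub>F sequentially)"
  proof (rule T_wconv_H0[OF _ _ _ T_wconv_H0])
    show "wconv (\<lambda>i. \<phi> (fst i)) H0 (sequentially \<times>\<^sub>F sequentially)"
      using wconv_compose[OF lim filterlim_fst] by (simp add: \<phi>_def)
    show "wconv (\<lambda>i. \<phi> (snd i)) H0 (sequentially \<times>\<^sub>F sequentially)"
      using wconv_compose[OF lim filterlim_snd] by (simp add: \<phi>_def)
    show "wconv (\<lambda>i. DDG (z (fst i)) (z (snd i))) H0 (sequentially \<times>\<^sub>F sequentially)"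
      using z by (simp add: pm_cauchy_def split_def)
  qed (simp_all add: \<phi> DD_in_Delta_plus zP T_in_Delta_plus)
  then have Gs_lim: "wconv Gs H0 (sequentially \<times>\<^sub>F sequentially)" by (simp add: Gs_def split_def)
  have Gs_le: "Gs (k, l) \<le> D (b k) (b l)" for k l
  proof -
    have inner: "T (DDG (z k) (z l)) (\<phi> l) \<le> DDG (z k) (deltaG (b l))"
      unfolding \<phi>_right by (rule DD_triangle[OF zP zP delta_map_in_Pi_set[OF bG]])
    have "Gs (k, l) \<le> T (\<phi> k) (DDG (z k) (deltaG (b l)))"
      unfolding Gs_def case_prod_conv
      by (rule T_mono[OF \<phi> \<phi> _ _ order_refl inner])
        (use zP bG in \<open>auto intro: T_in_Delta_plus DD_in_Delta_plus delta_map_in_Pi_set \<phi>\<close>)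
    also have "\<dots> \<le> DDG (deltaG (b k)) (deltaG (b l))"
      unfolding \<phi>_left by (intro DD_triangle zP delta_map_in_Pi_set bG)
    finally show ?thesis using DD_delta_map_delta_map bG by simp
  qed
  show "wconv (\<lambda>(n, p). D (b n) (b p)) H0 (sequentially \<times>\<^sub>F sequentially)"
    by (rule wconv_H0_squeeze[OF _ Gs Gs_lim always_eventually])
      (use Gs_le D_in_Delta_plus bG in \<open>auto split: prod.split\<close>)
qed

lemma pm_complete_Pi_set: "pm_complete PiG DDG"
  unfolding pm_complete_def
proof (intro allI impI)
  fix z assume z: "pm_cauchy PiG DDG z"
  have zP: "z k \<in> PiG" for k using z by (simp add: pm_cauchy_def)
  let ?e = "\<lambda>k::nat. inverse (real (Suc k))"
  have "\<exists>x. x \<in> carrier G \<and> 1 - ?e k < z k x (ereal (?e k))" for k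
    by (rule Pi_set_large_value[OF zP[of k], of "?e k"]) auto
  then obtain b where bG: "\<And>k. b k \<in> carrier G" and b: "\<And>k. 1 - ?e k < z k (b k) (ereal (?e k))"
    by metis
  have lim: "wconv (\<lambda>k. z k (b k)) H0 sequentially"
    by (rule wconv_H0_of_approx[OF Pi_set_Delta_plus[OF zP bG] b])
  obtain f where f: "f \<in> PiG" and fb: "represents f b"
    using pm_cauchy_represents[OF pm_cauchy_of_Pi_set_cauchy[OF z bG lim]] by blast
  have "wconv (\<lambda>k. DDG (z k) f) H0 sequentially"
  proof (rule wconv_H0_squeeze[OF DD_in_Delta_plus[OF zP f] _ T_wconv_H0[OF _ _ lim represents_wconv_H0[OF fb]]])
    show "eventually (\<lambda>k. T (z k (b k)) (f (b k)) \<le> DDG (z k) f) sequentially"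
      using DD_triangle[OF zP delta_map_in_Pi_set[OF bG] f] DD_delta_map[OF zP bG]
        DD_delta_map[OF f bG] DD_commute[OF f delta_map_in_Pi_set[OF bG]] by simp
  qed (use Pi_set_Delta_plus zP f bG in \<open>auto intro: T_in_Delta_plus\<close>)
  then show "\<exists>f\<in>PiG. wconv (\<lambda>n. DDG (z n) f) H0 sequentially" using f by blast
qed

end

theorem mainTheorem12:
  fixes G :: "('a, 'b) monoid_scheme"
    and D :: "'a \<Rightarrow> 'a \<Rightarrow> dfun"
    and T :: "dfun \<Rightarrow> dfun \<Rightarrow> dfun"
  assumes "inv_pm_group G D T"
    and "continuous_tf T"
  shows "(\<forall>f\<in>Pi_set (carrier G) D T. \<forall>g\<in>Pi_set (carrier G) D T.
            odot G T f g \<in> Pi_set (carrier G) D T)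
    \<and> inv_pm_group (Pi_group G D T) (DD (carrier G) T) T
    \<and> pm_complete (Pi_set (carrier G) D T) (DD (carrier G) T)
    \<and> \<one>\<^bsub>Pi_group G D T\<^esub> = delta_map (carrier G) D \<one>\<^bsub>G\<^esub>"
proof -
  interpret cont_inv_pm_group G D T
    using assms by unfold_locales
  show ?thesis
    using odot_in_Pi_set inv_pm_group_Pi_group pm_complete_Pi_set by (simp add: Pi_group_def)
qed

end
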